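(* There exist universal constants $c,C>0$ such that for every finite, irreducible, reversible Markov chain $(V,P)$ with reversible probability measure $m$, \[ c\,\alpha \le \alpha_{\operatorname{spectral}} \le C\,\alpha . \]
   Context: $V$ is a finite set, $P:V\times V\to[0,\infty)$ has symmetric support, the chain is connected, and $m$ is a probability measure with $m(x)P(x,y)=m(y)P(y,x)$. $\Delta f(x)=\sum_y P(x,y)(f(y)-f(x))$, $\langle f,g\rangle=\sum_x f(x)g(x)m(x)$, $\mathcal E(f,g)=-\langle\Delta f,g\rangle$. For $g\ge0$ with $\sum_x g(x)m(x)=1$, $\operatorname{Ent}(g)=\langle g,\log g\rangle$ (with $0\log 0=0$). The log-Sobolev constant is $\alpha=\inf\{\mathcal E(f,f)/\operatorname{Ent}(f^2): \|f\|_2=1,\ \operatorname{Ent}(f^2)>0\}$. The logarithmic mean is $\theta(s,t)=(s-t)/(\log s-\log t)$ for $s\neq t$, $\theta(s,s)=s$. For nonempty $X\subsetneq V$, $\lambda_X=\inf\{\mathcal E(f,f):\|f\|_2=1,\ f|_{V\setminus X}=0\}$, and $\alpha_{\operatorname{spectral}}=\inf_X\theta(\lambda_X,\lambda_{V\setminus X})$ over nonempty proper subsets $X$. *)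

theory Defs
  imports Complex_Main
begin

text \<open>Vertices are natural numbers; a finite state space is a finite set V of naturals.
  Functions on V are functions nat => real whose values outside V are ignored.\<close>

definition lap :: "nat set \<Rightarrow> (nat \<Rightarrow> nat \<Rightarrow> real) \<Rightarrow> (nat \<Rightarrow> real) \<Rightarrow> nat \<Rightarrow> real" where
  "lap V P f x = (\<Sum>y\<in>V. P x y * (f y - f x))"

definition inner_m :: "nat set \<Rightarrow> (nat \<Rightarrow> real) \<Rightarrow> (nat \<Rightarrow> real) \<Rightarrow> (nat \<Rightarrow> real) \<Rightarrow> real" where
  "inner_m V m f g = (\<Sum>x\<in>V. f x * g x * m x)"

definition dirichlet :: "nat set \<Rightarrow> (nat \<Rightarrow> nat \<Rightarrow> real) \<Rightarrow> (nat \<Rightarrow> real) \<Rightarrow> (nat \<Rightarrow> real) \<Rightarrow> (nat \<Rightarrow> real) \<Rightarrow> real" where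
  "dirichlet V P m f g = - inner_m V m (lap V P f) g"

text \<open>Ent(g) = <g, log g>, with 0 log 0 = 0 (note ln 0 = 0 in Isabelle).\<close>
definition Ent :: "nat set \<Rightarrow> (nat \<Rightarrow> real) \<Rightarrow> (nat \<Rightarrow> real) \<Rightarrow> real" where
  "Ent V m g = (\<Sum>x\<in>V. (if g x = 0 then 0 else g x * ln (g x)) * m x)"

definition log_sobolev :: "nat set \<Rightarrow> (nat \<Rightarrow> nat \<Rightarrow> real) \<Rightarrow> (nat \<Rightarrow> real) \<Rightarrow> real" where
  "log_sobolev V P m = Inf {dirichlet V P m f f / Ent V m (\<lambda>x. (f x)\<^sup>2) | f.
      inner_m V m f f = 1 \<and> Ent V m (\<lambda>x. (f x)\<^sup>2) > 0}"

definition log_mean :: "real \<Rightarrow> real \<Rightarrow> real" where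
  "log_mean s t = (if s = t then s else (s - t) / (ln s - ln t))"

definition dirichlet_eig :: "nat set \<Rightarrow> (nat \<Rightarrow> nat \<Rightarrow> real) \<Rightarrow> (nat \<Rightarrow> real) \<Rightarrow> nat set \<Rightarrow> real" where
  "dirichlet_eig V P m X = Inf {dirichlet V P m f f | f.
      inner_m V m f f = 1 \<and> (\<forall>x\<in>V - X. f x = 0)}"

definition alpha_spectral :: "nat set \<Rightarrow> (nat \<Rightarrow> nat \<Rightarrow> real) \<Rightarrow> (nat \<Rightarrow> real) \<Rightarrow> real" where
  "alpha_spectral V P m = Inf {log_mean (dirichlet_eig V P m X) (dirichlet_eig V P m (V - X)) | X.
      X \<subseteq> V \<and> X \<noteq> {} \<and> X \<noteq> V}"

definition reversible_chain :: "nat set \<Rightarrow> (nat \<Rightarrow> nat \<Rightarrow> real) \<Rightarrow> (nat \<Rightarrow> real) \<Rightarrow> bool" where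
  "reversible_chain V P m \<longleftrightarrow>
     finite V \<and>
     (\<forall>x\<in>V. \<forall>y\<in>V. P x y \<ge> 0) \<and>
     (\<forall>x\<in>V. \<forall>y\<in>V. P x y > 0 \<longleftrightarrow> P y x > 0) \<and>
     (\<forall>x\<in>V. \<forall>y\<in>V. (x, y) \<in> {(a, b). a \<in> V \<and> b \<in> V \<and> P a b > 0}\<^sup>*) \<and>
     (\<forall>x\<in>V. m x \<ge> 0) \<and> (\<Sum>x\<in>V. m x) = 1 \<and>
     (\<forall>x\<in>V. \<forall>y\<in>V. m x * P x y = m y * P y x)"

end

theory Submission
  imports Defs
begin

(* Lower bound: a unit function supported on X has Ent(f^2) >= -ln m(X), so
   lambda_X >= alpha (-ln m(X)) and lambda_(V-X) >= alpha (-ln (1 - m(X))); an elementary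
   inequality for the logarithmic mean then gives alpha <= 8 theta(lambda_X, lambda_(V-X)).

   Upper bound: cutting a nonnegative function phi supported on a set A with m(A) <= 1/2 at a
   level t gives a partition X, V-X with lambda_X <~ E(phi) and lambda_(V-X) <~ E(phi)/t^2.
   Hence alpha_spectral obeys a Faber-Krahn inequality
   alpha_spectral (-ln m(A)) |phi|^2 <~ E(phi).  Applied to the dyadic slices of the part of f
   above a median, where the slice at height 2^j lives on a set of mass <~ 4^-j, and summed,
   it bounds the large-value part of Ent(f^2); the remaining part is controlled by the
   variance of f about the median, which the inequality with A = {f > median} and
   A = {f < median} bounds as well. *)

section \<open>Elementary inequalities\<close>

lemma ln_2_gt_half: "ln 2 > (1/2 :: real)"
proof -
  have "exp (1/2::real) * exp (1/2) = exp 1" by (simp add: exp_add[symmetric])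
  hence "exp (1/2::real) ^ 2 < 2 ^ 2" using exp_le by (simp add: power2_eq_square)
  hence "exp (1/2::real) < 2" by (rule power_less_imp_less_base) simp
  hence "ln (exp (1/2::real)) < ln 2" by (subst ln_less_cancel_iff) auto
  thus ?thesis by simp
qed

lemma le_two_exp_half: "(L::real) \<le> 2 * exp (L / 2)"
  using exp_ge_add_one_self[of "L/2"] exp_gt_zero[of "L/2"] by linarith

lemma log_mean_commute: "log_mean a b = log_mean b a"
proof (cases "a = b")
  case False
  have "(b - a) / (ln b - ln a) = (a - b) / (ln a - ln b)"
    by (metis minus_diff_eq minus_divide_divide)
  thus ?thesis unfolding log_mean_def using False by simp
qed simp

lemma log_mean_between_less:
  assumes "0 < a" "a < b"
  shows "a \<le> log_mean a b" "log_mean a b \<le> b"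
proof -
  have l: "ln b - ln a > 0" using assms by simp
  have e: "log_mean a b = (b - a) / (ln b - ln a)"
    using log_mean_commute[of a b] assms unfolding log_mean_def by simp
  have "ln (b/a) \<le> b/a - 1" by (rule ln_le_minus_one) (use assms in simp)
  hence "ln b - ln a \<le> (b - a) / a" using assms by (simp add: ln_div diff_divide_distrib)
  hence "a * (ln b - ln a) \<le> b - a" using assms by (simp add: field_simps)
  thus "a \<le> log_mean a b" unfolding e using l by (simp add: field_simps)
  have "ln (a/b) \<le> a/b - 1" by (rule ln_le_minus_one) (use assms in simp)
  hence "ln a - ln b \<le> (a - b) / b" using assms by (simp add: ln_div diff_divide_distrib)
  hence "b - a \<le> b * (ln b - ln a)" using assms by (simp add: field_simps)
  thus "log_mean a b \<le> b" unfolding e using l by (simp add: field_simps)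
qed

lemma log_mean_between:
  assumes "0 < a" "0 < b"
  shows "min a b \<le> log_mean a b" "log_mean a b \<le> max a b"
proof -
  consider "a < b" | "a = b" | "b < a" by linarith
  hence "min a b \<le> log_mean a b \<and> log_mean a b \<le> max a b"
  proof cases
    case 1 thus ?thesis using log_mean_between_less[OF assms(1) 1] by simp
  next
    case 2 thus ?thesis unfolding log_mean_def by simp
  next
    case 3 thus ?thesis using log_mean_between_less[OF assms(2) 3] log_mean_commute[of a b] by simp
  qed
  thus "min a b \<le> log_mean a b" "log_mean a b \<le> max a b" by auto
qed

lemma log_mean_pos: "0 < a \<Longrightarrow> 0 < b \<Longrightarrow> 0 < log_mean a b"
  using log_mean_between(1)[of a b] by linarith

lemma mult_ln_2_le_max:
  assumes "0 \<le> c" "0 < p" "p < (1::real)" "c * - ln p \<le> a" "c * - ln (1 - p) \<le> b"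
  shows "c * ln 2 \<le> max a b"
proof (cases "p \<le> 1/2")
  case True
  hence "ln 2 \<le> ln (1/p)" using assms by (subst ln_le_cancel_iff) (auto simp: field_simps)
  hence "c * ln 2 \<le> c * - ln p" using assms by (intro mult_left_mono) (auto simp: ln_div)
  thus ?thesis using assms by linarith
next
  case False
  hence "ln 2 \<le> ln (1/(1-p))" using assms by (subst ln_le_cancel_iff) (auto simp: field_simps)
  hence "c * ln 2 \<le> c * - ln (1-p)" using assms by (intro mult_left_mono) (auto simp: ln_div)
  thus ?thesis using assms by linarith
qed

lemma le_two_div_ln_ratio:
  assumes B: "0 < B" "B < (A::real)" and x: "x \<le> B * exp ((ln A - ln B) / 2)"
  shows "x \<le> 2 * A / (ln A - ln B)"
proof -
  define L where "L = ln A - ln B"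
  have L: "L > 0" unfolding L_def using B by simp
  have "x * L \<le> B * exp (L/2) * L" using x L unfolding L_def by (intro mult_right_mono) auto
  also have "\<dots> \<le> B * exp (L/2) * (2 * exp (L/2))"
    using B le_two_exp_half[of L] by (intro mult_left_mono) auto
  also have "\<dots> = 2 * B * exp L" by (simp add: exp_add[symmetric])
  also have "\<dots> = 2 * A" unfolding L_def using B by (simp add: exp_diff)
  finally show ?thesis using L unfolding L_def[symmetric] by (simp add: field_simps)
qed

text \<open>Either a <= 4 b, where theta(a, b) >= b, or L = ln (a/b) > ln 4, and then one of the two
  hypotheses bounds c L by 2 a.\<close>

lemma le_log_mean_of_ln_bounds_ordered:
  assumes a: "0 < a" and b: "0 < b" and ba: "b \<le> a" and c: "0 \<le> c" and p: "0 < p" "p < 1"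
    and h1: "c * - ln p \<le> a" and h2: "c * - ln (1 - p) \<le> b"
  shows "c \<le> 8 * log_mean a b"
proof (cases "a \<le> 4 * b")
  case True
  have "b \<le> log_mean a b" using log_mean_between(1)[OF a b] ba by simp
  moreover have "c * ln 2 \<le> a" using mult_ln_2_le_max[OF c p h1 h2] ba by simp
  moreover have "c * (1/2) \<le> c * ln 2" using ln_2_gt_half c by (intro mult_left_mono) auto
  ultimately show ?thesis using True by linarith
next
  case False
  define L where "L = ln a - ln b"
  have Lpos: "L > 0" unfolding L_def using False b a by simp
  have lm: "log_mean a b = (a - b) / L" unfolding L_def log_mean_def using False b by auto
  have "c \<le> 2 * a / L"
  proof (cases "- ln p \<ge> L / 2")
    case True
    hence "c * (L/2) \<le> c * - ln p" using c by (intro mult_left_mono) auto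
    hence "c * L \<le> 2 * a" using h1 by linarith
    thus ?thesis using Lpos by (simp add: field_simps)
  next
    case False
    hence "- L / 2 < ln p" by simp
    hence "exp (- L / 2) < p" using p by (metis exp_less_cancel_iff exp_ln)
    hence "c * exp (- L / 2) \<le> c * p" using c by (intro mult_left_mono) auto
    also have "c * p \<le> c * - ln (1 - p)"
      using ln_le_minus_one[of "1 - p"] p c by (intro mult_left_mono) auto
    finally have "c * exp (- L / 2) \<le> b" using h2 by linarith
    hence "c \<le> b * exp (L/2)" by (simp add: exp_minus field_simps)
    thus ?thesis unfolding L_def using a b \<open>\<not> a \<le> 4 * b\<close> by (intro le_two_div_ln_ratio) auto
  qed
  also have "\<dots> \<le> 8 * ((a - b) / L)" using Lpos False b by (simp add: divide_right_mono field_simps)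
  finally show ?thesis using lm by simp
qed

lemma le_log_mean_of_ln_bounds:
  assumes "0 < a" "0 < b" "0 \<le> c" "0 < p" "p < 1"
    and "c * - ln p \<le> a" "c * - ln (1 - p) \<le> b"
  shows "c \<le> 8 * log_mean a b"
proof (cases "b \<le> a")
  case True thus ?thesis using le_log_mean_of_ln_bounds_ordered assms by blast
next
  case False
  have "c \<le> 8 * log_mean b a"
    by (rule le_log_mean_of_ln_bounds_ordered[of b a c "1 - p"]) (use False assms in auto)
  thus ?thesis using log_mean_commute by simp
qed

lemma log_mean_le_of_bounds:
  assumes a: "0 < a" "a \<le> A" and b: "0 < b" "b \<le> B" and B: "0 < B" "B < A"
  shows "log_mean a b \<le> 2 * A / (ln A - ln B)"
proof -
  define L where "L = ln A - ln B"
  have L: "L > 0" unfolding L_def using B by simp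
  have bound: "x \<le> 2 * A / L" if "x \<le> B * exp (L/2)" for x
    using le_two_div_ln_ratio[OF B] that unfolding L_def by simp
  have "log_mean a b \<le> 2 * A / L"
  proof (cases "a \<le> b")
    case True
    have "log_mean a b \<le> B" using log_mean_between(2)[OF a(1) b(1)] True b by simp
    also have "B \<le> B * exp (L/2)" using B L by simp
    finally show ?thesis by (rule bound)
  next
    case False
    define l where "l = ln a - ln b"
    have lpos: "l > 0" unfolding l_def using False b a by simp
    show ?thesis
    proof (cases "l \<ge> L / 2")
      case True
      have "log_mean a b = (a - b) / l" unfolding l_def log_mean_def using False by auto
      also have "\<dots> \<le> a / (L/2)" using True lpos L a b by (intro frac_le) auto
      also have "\<dots> \<le> 2 * A / L" using a L by (simp add: field_simps)
      finally show ?thesis .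
    next
      case False
      have "log_mean a b \<le> a" using log_mean_between(2)[OF a(1) b(1)] \<open>\<not> a \<le> b\<close> by simp
      also have "a = b * exp l" unfolding l_def using a b by (simp add: exp_diff)
      also have "\<dots> \<le> B * exp (L/2)" using b False by (intro mult_mono) auto
      finally show ?thesis by (rule bound)
    qed
  qed
  thus ?thesis unfolding L_def .
qed

lemma xlnx_ge_shifted:
  assumes "(s::real) > 0" "M > 0"
  shows "s - 1 / M \<le> s * (ln s + ln M)"
proof -
  have "ln (1 / (s * M)) \<le> 1 / (s * M) - 1" by (rule ln_le_minus_one) (use assms in simp)
  hence "1 - 1 / (s * M) \<le> ln s + ln M" using assms by (simp add: ln_div ln_mult)
  hence "s * (1 - 1 / (s * M)) \<le> s * (ln s + ln M)" using assms by (intro mult_left_mono) auto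
  moreover have "s * (1 - 1 / (s * M)) = s - 1 / M" using assms by (simp add: field_simps)
  ultimately show ?thesis by simp
qed

lemma sq_ln_sq_mono:
  assumes "1 \<le> a" "a \<le> (b::real)"
  shows "a^2 * ln (a^2) \<le> b^2 * ln (b^2)"
proof -
  have a2: "a^2 \<le> b^2" using assms by (intro power_mono) auto
  have a1: "1 \<le> a^2" using assms by (simp add: one_le_power)
  have "ln (a^2) \<le> ln (b^2)" using a2 a1 by (subst ln_le_cancel_iff) auto
  moreover have "0 \<le> ln (a^2)" using a1 by simp
  ultimately show ?thesis using a2 by (intro mult_mono) auto
qed

lemma pos_part_neg_part_diff_sq_le:
  "(max (a - t) 0 - max (b - t) 0)^2 + (max (t - a) 0 - max (t - b) 0)^2 \<le> ((a::real) - b)^2"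
proof -
  have "0 \<le> (a - t) * (t - b)" if "b \<le> t" "t \<le> a" for a b using that by simp
  from this[of b a] this[of a b] show ?thesis
    by (cases "a \<le> t"; cases "b \<le> t") (auto simp: power2_eq_square algebra_simps)
qed

lemma sq_two_power: "((2::real)^k)^2 = 4^k"
  by (simp add: power2_eq_square power_mult_distrib[symmetric])

lemma sum_sq_le_sq_sum:
  assumes "finite J" "\<And>j. j \<in> J \<Longrightarrow> (0::real) \<le> d j"
  shows "(\<Sum>j\<in>J. (d j)^2) \<le> (\<Sum>j\<in>J. d j)^2"
  using assms
proof (induction J rule: finite_induct)
  case (insert i J)
  have "(\<Sum>j\<in>insert i J. (d j)^2) \<le> (d i)^2 + (\<Sum>j\<in>J. d j)^2" using insert by simp
  also have "\<dots> \<le> (d i + (\<Sum>j\<in>J. d j))^2"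
    using insert.prems by (simp add: power2_sum sum_nonneg)
  finally show ?case using insert by simp
qed simp

lemma sq_ln_sq_sub_sq_add_one_le:
  assumes "(y::real) \<ge> 0"
  shows "(if y^2 = 0 then 0 else y^2 * ln (y^2)) - y^2 + 1
    \<le> 7 * (y - 1)^2 + (if y > 3 then y^2 * ln (y^2) else 0)"
proof (cases "y = 0")
  case False
  hence y: "y > 0" using assms by simp
  have "ln (y^2) \<le> 2 * (y - 1)" using ln_le_minus_one[OF y] y by (simp add: ln_realpow)
  hence l: "y^2 * ln (y^2) \<le> y^2 * (2 * (y - 1))" by (intro mult_left_mono) auto
  show ?thesis
  proof (cases "y > 3")
    case True
    have "1 \<le> y^2" using True by (simp add: one_le_power)
    hence "1 - y^2 \<le> 7 * (y - 1)^2" by (smt (verit) zero_le_power2)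
    thus ?thesis using True y by simp
  next
    case False
    have "y^2 * ln (y^2) - y^2 + 1 \<le> y^2 * (2 * (y - 1)) - y^2 + 1" using l by linarith
    also have "\<dots> = (y - 1)^2 * (2 * y + 1)" by (simp add: power2_eq_square algebra_simps)
    also have "\<dots> \<le> (y - 1)^2 * 7" using False by (intro mult_left_mono) auto
    finally show ?thesis using False y by (simp add: mult.commute)
  qed
qed simp

lemma sq_ln_sq_pointwise_bound:
  assumes y: "(y::real) \<ge> 0" and M: "0 \<le> M" "M \<le> 3/2"
  defines "w \<equiv> 2 * max (y - M) 0"
  shows "(if y^2 = 0 then 0 else y^2 * ln (y^2)) - y^2 + 1
    \<le> 14 * (y - M)^2 + 14 * (M - 1)^2 + (if w \<ge> 2 then w^2 * ln (w^2) else 0)"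
proof -
  have "(if y > 3 then y^2 * ln (y^2) else 0) \<le> (if w \<ge> 2 then w^2 * ln (w^2) else 0)"
  proof (cases "y > 3")
    case True
    hence "y \<le> w" unfolding w_def using M by simp
    thus ?thesis using True sq_ln_sq_mono[of y w] by simp
  next
    case False
    have "w \<ge> 2 \<Longrightarrow> 0 \<le> w^2 * ln (w^2)" by (simp add: one_le_power)
    thus ?thesis using False by simp
  qed
  moreover have "(y - 1)^2 \<le> 2 * (y - M)^2 + 2 * (M - 1)^2"
    using zero_le_power2[of "(y - M) - (M - 1)"] by (simp add: power2_eq_square algebra_simps)
  ultimately show ?thesis using sq_ln_sq_sub_sq_add_one_le[OF y] by linarith
qed

lemma ln_weight_le_neg_ln_mass:
  assumes "0 < p" "p \<le> 12 / 4^j"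
  shows "(real j + 2) * ln 4 \<le> (- ln p - ln 2) + 18"
proof -
  have "ln p \<le> ln 12 - real j * ln 4"
    using assms ln_le_cancel_iff[of p "12 / 4^j"] by (simp add: ln_div ln_realpow)
  moreover have "ln 2 + ln 12 + 2 * ln 4 \<le> (18::real)"
    using ln_le_minus_one[of 2] ln_le_minus_one[of 12] ln_le_minus_one[of 4] by simp
  ultimately show ?thesis by (simp add: algebra_simps)
qed

section \<open>Dyadic slices\<close>

definition dyadic_slice :: "nat \<Rightarrow> real \<Rightarrow> real" where
  "dyadic_slice j y = min (max (y - 2^j) 0) (2^j)"

lemma dyadic_slice_mono: "a \<le> b \<Longrightarrow> dyadic_slice j a \<le> dyadic_slice j b"
  unfolding dyadic_slice_def by (intro min.mono max.mono) auto

lemma sum_dyadic_slice: "(\<Sum>j\<le>K. dyadic_slice j y) = min (max (y - 1) 0) (2^(Suc K) - 1)"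
proof (induction K)
  case (Suc K)
  define T :: real where "T = 2^(Suc K)"
  have "1 \<le> T" unfolding T_def by (rule one_le_power) simp
  hence "min (max (y - 1) 0) (T - 1) + min (max (y - T) 0) T = min (max (y - 1) 0) (2 * T - 1)"
    by (auto simp: min_def max_def)
  thus ?case using Suc unfolding dyadic_slice_def T_def by simp
qed (simp add: dyadic_slice_def)

lemma sum_sq_dyadic_slice_diff_le:
  "(\<Sum>j\<le>K. (dyadic_slice j a - dyadic_slice j b)^2) \<le> (a - b)^2"
proof -
  have ordered: "(\<Sum>j\<le>K. (dyadic_slice j a - dyadic_slice j b)^2) \<le> (a - b)^2" if "b \<le> a" for a b
  proof -
    have "(\<Sum>j\<le>K. (dyadic_slice j a - dyadic_slice j b)^2) \<le> (\<Sum>j\<le>K. dyadic_slice j a - dyadic_slice j b)^2"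
      using dyadic_slice_mono[OF that] by (intro sum_sq_le_sq_sum) auto
    also have "(\<Sum>j\<le>K. dyadic_slice j a - dyadic_slice j b)
        = min (max (a - 1) 0) (2^(Suc K) - 1) - min (max (b - 1) 0) (2^(Suc K) - 1)"
      by (simp add: sum_subtractf sum_dyadic_slice)
    also have "(\<dots>)^2 \<le> (a - b)^2"
    proof -
      have "(1::real) \<le> 2^(Suc K)" by (rule one_le_power) simp
      thus ?thesis using that by (intro power_mono) (auto simp: min_def max_def)
    qed
    finally show ?thesis .
  qed
  show ?thesis
    using ordered[of b a] ordered[of a b] by (cases "b \<le> a") (auto simp: power2_commute)
qed

lemma dyadic_level_exists:
  "2 \<le> y \<Longrightarrow> y \<le> 2^(Suc K) \<Longrightarrow> \<exists>j\<le>K. 2^(j+1) \<le> y \<and> y \<le> (2::real)^(j+2)"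
proof (induction K)
  case (Suc K)
  show ?case
  proof (cases "y \<le> 2^(Suc K)")
    case True thus ?thesis using Suc by (meson le_SucI)
  next
    case False thus ?thesis using Suc.prems by (intro exI[of _ K]) auto
  qed
qed simp

lemma sq_ln_sq_le_dyadic_slices:
  assumes y: "2 \<le> y" "y \<le> 2^(Suc K)"
  shows "y^2 * ln (y^2) \<le> 16 * ln 4 * (\<Sum>j\<le>K. (real j + 2) * (dyadic_slice j y)^2)"
proof -
  obtain j where j: "j \<le> K" "2^(j+1) \<le> y" "y \<le> (2::real)^(j+2)"
    using dyadic_level_exists[OF y] by auto
  have slice: "dyadic_slice j y = 2^j" using j(2) unfolding dyadic_slice_def by simp
  have y2: "y^2 \<le> 4^(j+2)" using power_mono[OF j(3), of 2] y sq_two_power by simp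
  have "ln (y^2) \<le> ln (4^(j+2))" using y2 y by (subst ln_le_cancel_iff) auto
  also have "\<dots> = (real j + 2) * ln 4" by (subst ln_realpow) auto
  finally have l: "ln (y^2) \<le> (real j + 2) * ln 4" .
  have "0 \<le> ln (y^2)" using y by (simp add: one_le_power)
  hence "y^2 * ln (y^2) \<le> 4^(j+2) * ((real j + 2) * ln 4)"
    using y2 l by (intro mult_mono) auto
  also have "\<dots> = 16 * ln 4 * ((real j + 2) * (dyadic_slice j y)^2)"
    unfolding slice sq_two_power by (simp add: power_add algebra_simps)
  also have "\<dots> \<le> 16 * ln 4 * (\<Sum>j\<le>K. (real j + 2) * (dyadic_slice j y)^2)"
    using j(1) by (intro mult_left_mono member_le_sum) auto
  finally show ?thesis .
qed

section \<open>Reversible chains\<close>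

locale reversible_markov_chain =
  fixes V :: "nat set" and P :: "nat \<Rightarrow> nat \<Rightarrow> real" and m :: "nat \<Rightarrow> real"
  assumes chain: "reversible_chain V P m"
begin

lemma finite_V: "finite V"
  using chain unfolding reversible_chain_def by blast

lemma P_nonneg: "x \<in> V \<Longrightarrow> y \<in> V \<Longrightarrow> P x y \<ge> 0"
  using chain unfolding reversible_chain_def by blast

lemma P_pos_sym: "x \<in> V \<Longrightarrow> y \<in> V \<Longrightarrow> P x y > 0 \<longleftrightarrow> P y x > 0"
  using chain unfolding reversible_chain_def by blast

lemma sum_m: "(\<Sum>x\<in>V. m x) = 1"
  using chain unfolding reversible_chain_def by blast

lemma m_nonneg: "x \<in> V \<Longrightarrow> m x \<ge> 0"
  using chain unfolding reversible_chain_def by blast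

lemma detailed_balance: "x \<in> V \<Longrightarrow> y \<in> V \<Longrightarrow> m x * P x y = m y * P y x"
  using chain unfolding reversible_chain_def by blast

definition edges :: "(nat \<times> nat) set" where
  "edges = {(a, b). a \<in> V \<and> b \<in> V \<and> P a b > 0}"

lemma edges_connected: "x \<in> V \<Longrightarrow> y \<in> V \<Longrightarrow> (x, y) \<in> edges\<^sup>*"
  using chain unfolding reversible_chain_def edges_def by blast

lemma finite_edges: "finite edges"
  by (rule finite_subset[of _ "V \<times> V"]) (auto simp: edges_def finite_V)

lemma m_pos:
  assumes "x \<in> V" shows "m x > 0"
proof (rule ccontr)
  assume "\<not> m x > 0"
  hence m0: "m x = 0" using m_nonneg[OF assms] by auto
  have "m y = 0" if y: "y \<in> V" for y
    using edges_connected[OF assms y]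
  proof (induction rule: rtrancl_induct)
    case (step y z)
    hence yz: "y \<in> V" "z \<in> V" "P y z > 0" "P z y > 0" unfolding edges_def using P_pos_sym by auto
    have "m z * P z y = 0" using detailed_balance[OF yz(1,2)] step.IH by simp
    thus ?case using yz(4) by simp
  qed (rule m0)
  hence "(\<Sum>x\<in>V. m x) = 0" by simp
  thus False using sum_m by simp
qed

lemma sum_m_pos: "A \<subseteq> V \<Longrightarrow> A \<noteq> {} \<Longrightarrow> sum m A > 0"
  using finite_V m_pos by (intro sum_pos) (auto intro: finite_subset)

lemma sum_m_mono: "A \<subseteq> B \<Longrightarrow> B \<subseteq> V \<Longrightarrow> sum m A \<le> sum m B"
  using finite_V m_nonneg by (intro sum_mono2) (auto intro: finite_subset)

lemma sum_m_Diff: "A \<subseteq> V \<Longrightarrow> sum m (V - A) = 1 - sum m A"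
  using sum.subset_diff[OF _ finite_V, of A m] sum_m by simp

lemma sum_m_less_1: "A \<subseteq> V \<Longrightarrow> A \<noteq> V \<Longrightarrow> sum m A < 1"
  using sum_m_Diff[of A] sum_m_pos[of "V - A"] by auto

lemma exists_other_point:
  assumes "card V \<ge> 2" shows "\<exists>y\<in>V. y \<noteq> x"
proof (rule ccontr)
  assume "\<not> ?thesis"
  hence "card V \<le> card {x}" by (intro card_mono) auto
  thus False using assms by simp
qed

lemma m_less_1: "card V \<ge> 2 \<Longrightarrow> x \<in> V \<Longrightarrow> m x < 1"
  using sum_m_less_1[of "{x}"] exists_other_point[of x] by force

abbreviation energy :: "(nat \<Rightarrow> real) \<Rightarrow> real" where
  "energy f \<equiv> dirichlet V P m f f"

abbreviation sqnorm :: "(nat \<Rightarrow> real) \<Rightarrow> real" where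
  "sqnorm f \<equiv> inner_m V m f f"

abbreviation ent_sq :: "(nat \<Rightarrow> real) \<Rightarrow> real" where
  "ent_sq f \<equiv> Ent V m (\<lambda>x. (f x)\<^sup>2)"

lemma edge_weight_nonneg: "x \<in> V \<Longrightarrow> y \<in> V \<Longrightarrow> m x * P x y \<ge> 0"
  using m_nonneg P_nonneg by simp

lemma energy_eq_sum: "energy f = (\<Sum>x\<in>V. \<Sum>y\<in>V. m x * P x y * (f x - f y)^2) / 2"
proof -
  define S1 where "S1 = (\<Sum>x\<in>V. \<Sum>y\<in>V. m x * P x y * (f x * (f x - f y)))"
  define S2 where "S2 = (\<Sum>x\<in>V. \<Sum>y\<in>V. m x * P x y * (f y * (f y - f x)))"
  have "energy f = S1"
    unfolding dirichlet_def inner_m_def lap_def S1_def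
    by (simp add: sum_distrib_left sum_distrib_right sum_negf[symmetric] algebra_simps)
  moreover have "S2 = S1"
    unfolding S2_def S1_def by (subst sum.swap) (intro sum.cong refl, simp add: detailed_balance)
  moreover have "(\<Sum>x\<in>V. \<Sum>y\<in>V. m x * P x y * (f x - f y)^2) = S1 + S2"
    unfolding S1_def S2_def sum.distrib[symmetric]
    by (intro sum.cong refl) (simp add: power2_eq_square algebra_simps)
  ultimately show ?thesis by simp
qed

lemma energy_nonneg: "energy f \<ge> 0"
  unfolding energy_eq_sum
  by (intro divide_nonneg_pos sum_nonneg mult_nonneg_nonneg edge_weight_nonneg) auto

lemma sum_energy_le:
  assumes "finite J" "\<And>x y. x \<in> V \<Longrightarrow> y \<in> V \<Longrightarrow> (\<Sum>j\<in>J. (g j x - g j y)^2) \<le> (f x - f y)^2"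
  shows "(\<Sum>j\<in>J. energy (g j)) \<le> energy f"
proof -
  have "(\<Sum>j\<in>J. energy (g j))
      = (\<Sum>x\<in>V. \<Sum>y\<in>V. m x * P x y * (\<Sum>j\<in>J. (g j x - g j y)^2)) / 2"
    unfolding energy_eq_sum sum_divide_distrib[symmetric] sum_distrib_left
    by (subst sum.swap, rule arg_cong[where f="\<lambda>t. t/2"], intro sum.cong refl, rule sum.swap)
  also have "\<dots> \<le> energy f"
    unfolding energy_eq_sum
    by (intro divide_right_mono sum_mono mult_left_mono edge_weight_nonneg assms) auto
  finally show ?thesis .
qed

lemma energy_mono:
  assumes "\<And>x y. x \<in> V \<Longrightarrow> y \<in> V \<Longrightarrow> (g x - g y)^2 \<le> (f x - f y)^2"
  shows "energy g \<le> energy f"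
  using sum_energy_le[of "{()}" "\<lambda>_. g" f] assms by simp

lemma energy_pos_part_neg_part_le:
  "energy (\<lambda>x. max (f x - t) 0) + energy (\<lambda>x. max (t - f x) 0) \<le> energy f"
  using sum_energy_le[of "{True, False}" "\<lambda>b x. if b then max (f x - t) 0 else max (t - f x) 0" f]
    pos_part_neg_part_diff_sq_le by simp

lemma energy_pos_part_le: "energy (\<lambda>x. max (f x - t) 0) \<le> energy f"
  and energy_neg_part_le: "energy (\<lambda>x. max (t - f x) 0) \<le> energy f"
  using energy_pos_part_neg_part_le[of f t] energy_nonneg[of "\<lambda>x. max (f x - t) 0"]
    energy_nonneg[of "\<lambda>x. max (t - f x) 0"] by linarith+

lemma energy_scale: "energy (\<lambda>x. c * f x) = c^2 * energy f"
  unfolding energy_eq_sum by (simp add: sum_distrib_left power2_eq_square algebra_simps)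

lemma sqnorm_eq_sum: "sqnorm f = (\<Sum>x\<in>V. (f x)^2 * m x)"
  unfolding inner_m_def by (simp add: power2_eq_square)

lemma sqnorm_scale: "sqnorm (\<lambda>x. c * f x) = c^2 * sqnorm f"
  unfolding inner_m_def by (simp add: sum_distrib_left power2_eq_square algebra_simps)

lemma sqnorm_nonneg: "sqnorm f \<ge> 0"
  unfolding sqnorm_eq_sum using m_nonneg by (intro sum_nonneg) simp

lemma sqnorm_normalize:
  assumes "sqnorm f > 0"
  shows "sqnorm (\<lambda>x. (1 / sqrt (sqnorm f)) * f x) = 1"
    and "energy (\<lambda>x. (1 / sqrt (sqnorm f)) * f x) = energy f / sqnorm f"
  using assms unfolding sqnorm_scale energy_scale by (simp_all add: power_divide)

lemma support_nonempty: "\<forall>x\<in>V - A. f x = 0 \<Longrightarrow> sqnorm f \<noteq> 0 \<Longrightarrow> A \<noteq> {}"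
  unfolding inner_m_def by auto

lemma chebyshev: "0 \<le> t \<Longrightarrow> t^2 * sum m {x\<in>V. t \<le> \<bar>f x\<bar>} \<le> sqnorm f"
proof -
  assume t: "0 \<le> t"
  have "t^2 * sum m {x\<in>V. t \<le> \<bar>f x\<bar>} = (\<Sum>x\<in>{x\<in>V. t \<le> \<bar>f x\<bar>}. t^2 * m x)"
    by (simp add: sum_distrib_left)
  also have "\<dots> \<le> (\<Sum>x\<in>{x\<in>V. t \<le> \<bar>f x\<bar>}. (f x)^2 * m x)"
  proof (intro sum_mono mult_right_mono)
    fix x assume "x \<in> {x\<in>V. t \<le> \<bar>f x\<bar>}"
    thus "t^2 \<le> (f x)^2" "0 \<le> m x"
      using t power_mono[of t "\<bar>f x\<bar>" 2] m_nonneg by auto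
  qed
  also have "\<dots> \<le> sqnorm f"
    unfolding sqnorm_eq_sum using finite_V m_nonneg by (intro sum_mono2) auto
  finally show ?thesis .
qed

lemma sum_m_above_le:
  assumes "0 < t" shows "sum m {x\<in>V. t < f x} \<le> sqnorm f / t^2"
proof -
  have "t^2 * sum m {x\<in>V. t < f x} \<le> t^2 * sum m {x\<in>V. t \<le> \<bar>f x\<bar>}"
    by (intro mult_left_mono sum_m_mono) auto
  also have "\<dots> \<le> sqnorm f" by (rule chebyshev) (use assms in simp)
  finally show ?thesis using assms by (simp add: field_simps)
qed

abbreviation eig :: "nat set \<Rightarrow> real" where
  "eig X \<equiv> dirichlet_eig V P m X"

lemma edge_term_le_energy:
  assumes "a \<in> V" "b \<in> V" shows "m a * P a b * (f a - f b)^2 \<le> 2 * energy f"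
proof -
  have "m a * P a b * (f a - f b)^2 \<le> (\<Sum>y\<in>V. m a * P a y * (f a - f y)^2)"
    by (rule member_le_sum[OF assms(2)]) (use edge_weight_nonneg assms finite_V in auto)
  also have "\<dots> \<le> (\<Sum>x\<in>V. \<Sum>y\<in>V. m x * P x y * (f x - f y)^2)"
    by (rule member_le_sum[OF assms(1)])
      (auto intro!: sum_nonneg mult_nonneg_nonneg edge_weight_nonneg simp: finite_V)
  finally show ?thesis unfolding energy_eq_sum by simp
qed

lemma edge_weight_lower_bound: "\<exists>q>0. \<forall>(a, b)\<in>edges. q \<le> m a * P a b"
proof -
  define W where "W = insert 1 ((\<lambda>(a, b). m a * P a b) ` edges)"
  have finW: "finite W" unfolding W_def using finite_edges by blast
  have "\<forall>w\<in>W. 0 < w" unfolding W_def edges_def using m_pos by auto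
  hence "Min W > 0" using Min_in[OF finW] unfolding W_def by blast
  moreover have "\<forall>(a, b)\<in>edges. Min W \<le> m a * P a b"
  proof clarify
    fix a b assume "(a, b) \<in> edges"
    hence "m a * P a b \<in> W" unfolding W_def by force
    thus "Min W \<le> m a * P a b" by (rule Min_le[OF finW])
  qed
  ultimately show ?thesis by blast
qed

lemma path_diff_le_energy:
  assumes q: "q > 0" "\<And>a b. (a, b) \<in> edges \<Longrightarrow> q \<le> m a * P a b"
    and path: "(a, b) \<in> edges ^^ n"
  shows "\<bar>f a - f b\<bar> \<le> real n * sqrt (2 * energy f / q)"
  using path
proof (induction n arbitrary: b)
  case (Suc n)
  then obtain y where y: "(a, y) \<in> edges ^^ n" "(y, b) \<in> edges" by auto
  have "q * (f y - f b)^2 \<le> m y * P y b * (f y - f b)^2"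
    by (rule mult_right_mono[OF q(2)[OF y(2)]]) simp
  also have "\<dots> \<le> 2 * energy f" using y(2) by (intro edge_term_le_energy) (auto simp: edges_def)
  finally have "(f y - f b)^2 \<le> 2 * energy f / q" using q by (simp add: field_simps)
  hence "sqrt ((f y - f b)^2) \<le> sqrt (2 * energy f / q)" by (rule real_sqrt_le_mono)
  hence "\<bar>f a - f b\<bar> \<le> \<bar>f a - f y\<bar> + sqrt (2 * energy f / q)" by simp
  also have "\<dots> \<le> real n * sqrt (2 * energy f / q) + sqrt (2 * energy f / q)"
    using Suc.IH[OF y(1)] by simp
  finally show ?case by (simp add: algebra_simps)
qed simp

text \<open>A function vanishing at one vertex is controlled by its energy along paths of length at
  most the number of edges.\<close>

lemma sqnorm_le_energy_if_vanishing:
  "\<exists>K>0. \<forall>f. (\<exists>z\<in>V. f z = 0) \<longrightarrow> sqnorm f \<le> K * energy f"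
proof -
  obtain q where q: "q > 0" "\<And>a b. (a, b) \<in> edges \<Longrightarrow> q \<le> m a * P a b"
    using edge_weight_lower_bound by auto
  define c where "c = real (card edges)"
  have "sqnorm f \<le> (c^2 * 2 / q) * energy f" if vanish: "\<exists>z\<in>V. f z = 0" for f
  proof -
    obtain z where z: "z \<in> V" "f z = 0" using vanish by blast
    have "(f x)^2 \<le> c^2 * (2 * energy f / q)" if x: "x \<in> V" for x
    proof -
      obtain n where n: "n \<le> card edges" "(z, x) \<in> edges ^^ n"
        using edges_connected[OF z(1) x] rtrancl_finite_eq_relpow[OF finite_edges] by auto
      have "\<bar>f x\<bar> \<le> real n * sqrt (2 * energy f / q)"
        using path_diff_le_energy[OF q n(2), where f=f] z by simp
      also have "\<dots> \<le> c * sqrt (2 * energy f / q)" unfolding c_def using n(1) energy_nonneg[of f] q(1) by (intro mult_right_mono) auto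
      finally have "\<bar>f x\<bar>^2 \<le> (c * sqrt (2 * energy f / q))^2" by (intro power_mono) auto
      thus ?thesis using energy_nonneg q by (simp add: power_mult_distrib)
    qed
    hence "sqnorm f \<le> (\<Sum>x\<in>V. (c^2 * (2 * energy f / q)) * m x)"
      unfolding sqnorm_eq_sum by (intro sum_mono mult_right_mono) (auto simp: m_nonneg)
    also have "\<dots> = c^2 * (2 * energy f / q)" by (simp only: sum_distrib_left[symmetric] sum_m)
    finally show ?thesis by simp
  qed
  moreover have "c^2 * 2 / q + 1 > 0" using q by (intro add_nonneg_pos divide_nonneg_pos) auto
  moreover have "(c^2 * 2 / q) * energy f \<le> (c^2 * 2 / q + 1) * energy f" for f
    using energy_nonneg[of f] by (simp add: algebra_simps)
  ultimately show ?thesis by (meson order_trans)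
qed

lemma sqnorm_point_mass:
  assumes "x \<in> V" shows "sqnorm (\<lambda>y. if y = x then 1 / sqrt (m x) else 0) = 1"
proof -
  have "sqnorm (\<lambda>y. if y = x then 1 / sqrt (m x) else 0) = (\<Sum>y\<in>V. if y = x then 1 else 0)"
    unfolding sqnorm_eq_sum using m_pos[OF assms] by (intro sum.cong) (auto simp: power_divide)
  thus ?thesis using assms finite_V by simp
qed

lemma ent_sq_point_mass:
  assumes "x \<in> V" shows "ent_sq (\<lambda>y. if y = x then 1 / sqrt (m x) else 0) = - ln (m x)"
proof -
  have "ent_sq (\<lambda>y. if y = x then 1 / sqrt (m x) else 0) = (\<Sum>y\<in>V. if y = x then - ln (m x) else 0)"
    unfolding Ent_def using m_pos[OF assms] by (intro sum.cong) (auto simp: power_divide ln_div)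
  thus ?thesis using assms finite_V by simp
qed

lemma eig_le_rayleigh:
  assumes "\<forall>x\<in>V - X. f x = 0" "sqnorm f > 0"
  shows "eig X \<le> energy f / sqnorm f"
  unfolding dirichlet_eig_def
proof (rule cInf_lower)
  define g where "g = (\<lambda>x. (1 / sqrt (sqnorm f)) * f x)"
  have "\<forall>x\<in>V - X. g x = 0" using assms(1) unfolding g_def by simp
  moreover have "sqnorm g = 1" "energy g = energy f / sqnorm f"
    using sqnorm_normalize[OF assms(2)] unfolding g_def by auto
  ultimately show "energy f / sqnorm f \<in> {energy f |f. sqnorm f = 1 \<and> (\<forall>x\<in>V - X. f x = 0)}"
    by (intro CollectI exI[of _ g]) simp
qed (auto intro!: bdd_belowI[of _ 0] energy_nonneg)

lemma eig_greatest:
  assumes "X \<subseteq> V" "X \<noteq> {}"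
    and "\<And>f. sqnorm f = 1 \<Longrightarrow> \<forall>x\<in>V - X. f x = 0 \<Longrightarrow> c \<le> energy f"
  shows "c \<le> eig X"
  unfolding dirichlet_eig_def
proof (rule cInf_greatest)
  obtain x where x: "x \<in> X" using assms by blast
  have "\<forall>y\<in>V - X. (if y = x then 1 / sqrt (m x) else 0) = 0" using x by auto
  thus "{energy f |f. sqnorm f = 1 \<and> (\<forall>x\<in>V - X. f x = 0)} \<noteq> {}"
    using sqnorm_point_mass[of x] x assms(1) by blast
qed (use assms(3) in blast)

lemma eig_pos:
  assumes "X \<subseteq> V" "X \<noteq> {}" "X \<noteq> V" shows "eig X > 0"
proof -
  obtain K where K: "K > 0" "\<And>f. (\<exists>z\<in>V. f z = 0) \<Longrightarrow> sqnorm f \<le> K * energy f"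
    using sqnorm_le_energy_if_vanishing by blast
  obtain z where z: "z \<in> V" "z \<notin> X" using assms by blast
  have "1 / K \<le> eig X"
  proof (rule eig_greatest[OF assms(1,2)])
    fix f assume "sqnorm f = 1" "\<forall>x\<in>V - X. f x = 0"
    hence "1 \<le> K * energy f" using K(2)[of f] z by auto
    thus "1 / K \<le> energy f" using K(1) by (simp add: field_simps)
  qed
  thus ?thesis using K(1) by (meson less_le_trans divide_pos_pos zero_less_one)
qed

abbreviation alpha :: real where
  "alpha \<equiv> log_sobolev V P m"

lemma log_sobolev_le:
  assumes "sqnorm f = 1" "ent_sq f > 0"
  shows "alpha \<le> energy f / ent_sq f"
  unfolding log_sobolev_def
  by (rule cInf_lower) (use assms in blast, auto intro!: bdd_belowI[of _ 0] divide_nonneg_pos energy_nonneg)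

lemma log_sobolev_greatest:
  assumes "card V \<ge> 2"
    and "\<And>f. sqnorm f = 1 \<Longrightarrow> ent_sq f > 0 \<Longrightarrow> c \<le> energy f / ent_sq f"
  shows "c \<le> alpha"
  unfolding log_sobolev_def
proof (rule cInf_greatest)
  obtain x where x: "x \<in> V" using assms(1) by fastforce
  have "ent_sq (\<lambda>y. if y = x then 1 / sqrt (m x) else 0) > 0"
    using ent_sq_point_mass[OF x] m_less_1[OF assms(1) x] m_pos[OF x] by simp
  thus "{energy f / ent_sq f |f. sqnorm f = 1 \<and> ent_sq f > 0} \<noteq> {}"
    using sqnorm_point_mass[OF x] by blast
qed (use assms(2) in blast)

lemma log_sobolev_nonneg:
  assumes "card V \<ge> 2" shows "0 \<le> alpha"
proof (rule log_sobolev_greatest[OF assms])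
  fix f assume "ent_sq f > 0"
  thus "0 \<le> energy f / ent_sq f" using energy_nonneg[of f] by simp
qed

section \<open>The lower bound\<close>

lemma ent_sq_ge_neg_ln_support:
  assumes X: "X \<subseteq> V" and f1: "sqnorm f = 1" and supp: "\<forall>x\<in>V - X. f x = 0"
  shows "- ln (sum m X) \<le> ent_sq f"
proof -
  define M where "M = sum m X"
  have M: "M > 0" unfolding M_def using sum_m_pos[OF X] support_nonempty[OF supp] f1 by simp
  have pointwise: "(if f x = 0 then 0 else (f x)^2 * m x - m x / M)
      \<le> (if (f x)^2 = 0 then 0 else (f x)^2 * ln ((f x)^2)) * m x + (f x)^2 * m x * ln M"
    if x: "x \<in> V" for x
  proof (cases "f x = 0")
    case False
    have "((f x)^2 - 1 / M) * m x \<le> ((f x)^2 * (ln ((f x)^2) + ln M)) * m x"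
      using xlnx_ge_shifted[of "(f x)^2" M] M False m_nonneg[OF x] by (intro mult_right_mono) auto
    thus ?thesis using False by (simp add: algebra_simps)
  qed simp
  have "(\<Sum>x\<in>V. if f x = 0 then 0 else m x / M) \<le> (\<Sum>x\<in>V. if x \<in> X then m x / M else 0)"
    using supp m_nonneg M by (intro sum_mono) auto
  also have "\<dots> = 1"
    using X finite_V M by (simp add: sum.If_cases Int_absorb1 sum_divide_distrib[symmetric] M_def)
  finally have "0 \<le> (\<Sum>x\<in>V. (f x)^2 * m x) - (\<Sum>x\<in>V. if f x = 0 then 0 else m x / M)"
    using f1 by (simp add: sqnorm_eq_sum)
  also have "\<dots> = (\<Sum>x\<in>V. if f x = 0 then 0 else (f x)^2 * m x - m x / M)"
    by (subst sum_subtractf[symmetric]) (auto intro!: sum.cong)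
  also have "\<dots> \<le> ent_sq f + ln M * sqnorm f"
    unfolding Ent_def sqnorm_eq_sum sum_distrib_left sum.distrib[symmetric]
    by (intro sum_mono) (use pointwise in \<open>auto simp: algebra_simps\<close>)
  finally show ?thesis unfolding M_def using f1 by simp
qed

lemma log_sobolev_mult_neg_ln_le_eig:
  assumes "card V \<ge> 2" "X \<subseteq> V" "X \<noteq> {}" "X \<noteq> V"
  shows "alpha * - ln (sum m X) \<le> eig X"
proof (rule eig_greatest[OF assms(2,3)])
  fix f assume f1: "sqnorm f = 1" and supp: "\<forall>x\<in>V - X. f x = 0"
  have ent: "- ln (sum m X) \<le> ent_sq f" by (rule ent_sq_ge_neg_ln_support[OF assms(2) f1 supp])
  have "ln (sum m X) < 0" using sum_m_pos[OF assms(2,3)] sum_m_less_1[OF assms(2,4)] by simp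
  hence pos: "ent_sq f > 0" using ent by linarith
  have "alpha * - ln (sum m X) \<le> alpha * ent_sq f"
    using log_sobolev_nonneg[OF assms(1)] ent by (intro mult_left_mono) auto
  also have "\<dots> \<le> energy f" using log_sobolev_le[OF f1 pos] pos by (simp add: field_simps)
  finally show "alpha * - ln (sum m X) \<le> energy f" .
qed

abbreviation alpha_spec :: real where
  "alpha_spec \<equiv> alpha_spectral V P m"

lemma alpha_spectral_le:
  assumes "X \<subseteq> V" "X \<noteq> {}" "X \<noteq> V"
  shows "alpha_spec \<le> log_mean (eig X) (eig (V - X))"
  unfolding alpha_spectral_def
proof (rule cInf_lower)
  have "{log_mean (eig X) (eig (V - X)) |X. X \<subseteq> V \<and> X \<noteq> {} \<and> X \<noteq> V}
      \<subseteq> (\<lambda>X. log_mean (eig X) (eig (V - X))) ` Pow V" by auto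
  thus "bdd_below {log_mean (eig X) (eig (V - X)) |X. X \<subseteq> V \<and> X \<noteq> {} \<and> X \<noteq> V}"
    using finite_V by (meson bdd_below_finite finite_Pow_iff finite_imageI finite_subset)
qed (use assms in blast)

lemma alpha_spectral_greatest:
  assumes "card V \<ge> 2"
    and "\<And>X. X \<subseteq> V \<Longrightarrow> X \<noteq> {} \<Longrightarrow> X \<noteq> V \<Longrightarrow> c \<le> log_mean (eig X) (eig (V - X))"
  shows "c \<le> alpha_spec"
  unfolding alpha_spectral_def
proof (rule cInf_greatest)
  obtain x where x: "x \<in> V" using assms(1) by fastforce
  hence "{x} \<noteq> V" using exists_other_point[OF assms(1)] by blast
  thus "{log_mean (eig X) (eig (V - X)) |X. X \<subseteq> V \<and> X \<noteq> {} \<and> X \<noteq> V} \<noteq> {}"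
    using x by blast
qed (use assms(2) in blast)

lemma alpha_spectral_nonneg:
  assumes "card V \<ge> 2" shows "0 \<le> alpha_spec"
proof (rule alpha_spectral_greatest[OF assms])
  fix X assume X: "X \<subseteq> V" "X \<noteq> {}" "X \<noteq> V"
  hence "V - X \<subseteq> V" "V - X \<noteq> {}" "V - X \<noteq> V" by auto
  thus "0 \<le> log_mean (eig X) (eig (V - X))"
    using log_mean_pos[OF eig_pos[OF X]] eig_pos by (simp add: less_imp_le)
qed

theorem log_sobolev_le_alpha_spectral:
  assumes "card V \<ge> 2"
  shows "alpha \<le> 8 * alpha_spec"
proof -
  have "alpha / 8 \<le> alpha_spec"
  proof (rule alpha_spectral_greatest[OF assms])
    fix X assume X: "X \<subseteq> V" "X \<noteq> {}" "X \<noteq> V"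
    hence X': "V - X \<subseteq> V" "V - X \<noteq> {}" "V - X \<noteq> V" by auto
    have "alpha \<le> 8 * log_mean (eig X) (eig (V - X))"
      by (rule le_log_mean_of_ln_bounds[OF eig_pos[OF X] eig_pos[OF X'] log_sobolev_nonneg[OF assms]
            sum_m_pos[OF X(1,2)] sum_m_less_1[OF X(1,3)] log_sobolev_mult_neg_ln_le_eig[OF assms X]])
        (use log_sobolev_mult_neg_ln_le_eig[OF assms X'] sum_m_Diff[OF X(1)] in simp)
    thus "alpha / 8 \<le> log_mean (eig X) (eig (V - X))" by simp
  qed
  thus ?thesis by simp
qed

section \<open>The upper bound\<close>

lemma sqnorm_le_pos_part:
  assumes A: "A \<subseteq> V" and nonneg: "\<forall>x\<in>V. f x \<ge> 0" and supp: "\<forall>x\<in>V - A. f x = 0"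
    and t: "t \<ge> 0"
  shows "sqnorm f \<le> 2 * sqnorm (\<lambda>x. max (f x - t) 0) + 2 * t^2 * sum m A"
proof -
  define u where "u = (\<lambda>x. max (f x - t) 0)"
  have "(f x)^2 * m x \<le> 2 * ((u x)^2 * m x) + 2 * t^2 * (if x \<in> A then m x else 0)"
    if x: "x \<in> V" for x
  proof -
    have "(f x)^2 \<le> 2 * (u x)^2 + 2 * t^2 * (if x \<in> A then 1 else 0)"
    proof (cases "f x > t")
      case True
      hence "f x = u x + t" "x \<in> A" using supp x t by (auto simp: u_def) force
      thus ?thesis using zero_le_power2[of "u x - t"] by (simp add: power2_eq_square algebra_simps)
    next
      case False
      hence "(f x)^2 \<le> t^2" "u x = 0" using nonneg x power_mono[of "f x" t 2] by (auto simp: u_def)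
      moreover have "(f x)^2 \<le> 2 * t^2" using calculation(1) zero_le_power2[of t] by linarith
      ultimately show ?thesis using supp x by (cases "x \<in> A") auto
    qed
    hence "(f x)^2 * m x \<le> (2 * (u x)^2 + 2 * t^2 * (if x \<in> A then 1 else 0)) * m x"
      by (rule mult_right_mono) (rule m_nonneg[OF x])
    thus ?thesis by (cases "x \<in> A") (simp_all add: algebra_simps)
  qed
  hence "sqnorm f \<le> (\<Sum>x\<in>V. 2 * ((u x)^2 * m x) + 2 * t^2 * (if x \<in> A then m x else 0))"
    unfolding sqnorm_eq_sum by (rule sum_mono)
  also have "\<dots> = 2 * sqnorm u + 2 * t^2 * (\<Sum>x\<in>V. if x \<in> A then m x else 0)"
    by (simp add: sum.distrib sum_distrib_left sqnorm_eq_sum)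
  also have "(\<Sum>x\<in>V. if x \<in> A then m x else 0) = sum m A"
    using A finite_V by (simp add: sum.If_cases Int_absorb1)
  finally show ?thesis unfolding u_def .
qed

lemma sqnorm_neg_part_ge:
  assumes supp: "\<forall>x\<in>V - A. f x = 0" and t: "t \<ge> 0"
  shows "t^2 * sum m (V - A) \<le> sqnorm (\<lambda>x. max (t - f x) 0)"
proof -
  have "t^2 * sum m (V - A) \<le> (\<Sum>x\<in>V - A. (max (t - f x) 0)^2 * m x)"
    unfolding sum_distrib_left using supp t m_nonneg by (intro sum_mono mult_right_mono) auto
  also have "\<dots> \<le> sqnorm (\<lambda>x. max (t - f x) 0)"
    unfolding sqnorm_eq_sum using finite_V m_nonneg by (intro sum_mono2) auto
  finally show ?thesis .
qed

text \<open>Cutting f at height t: the part above t lives on a subset X of A, and the part below t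
  is at least t on the complement of A.\<close>

lemma level_set_partition:
  assumes A: "A \<subseteq> V" "sum m A \<le> 1/2" and nonneg: "\<forall>x\<in>V. f x \<ge> 0"
    and supp: "\<forall>x\<in>V - A. f x = 0" and f1: "sqnorm f = 1" and t: "t > 0" "t^2 * sum m A \<le> 1/4"
  obtains X where "X \<subseteq> V" "X \<noteq> {}" "X \<noteq> V"
    "eig X \<le> 4 * energy f" "eig (V - X) \<le> 2 * energy f / t^2"
proof -
  define X where "X = {x\<in>V. f x > t}"
  define u where "u = (\<lambda>x. max (f x - t) 0)"
  define g where "g = (\<lambda>x. max (t - f x) 0)"
  have u: "sqnorm u \<ge> 1/4"
    using sqnorm_le_pos_part[OF A(1) nonneg supp, of t] f1 t unfolding u_def by linarith
  have "sum m (V - A) \<ge> 1/2" using sum_m_Diff[OF A(1)] A(2) by simp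
  hence "t^2 * (1/2) \<le> t^2 * sum m (V - A)" by (intro mult_left_mono) auto
  hence g: "sqnorm g \<ge> t^2 / 2" using sqnorm_neg_part_ge[OF supp, of t] t unfolding g_def by linarith
  have uX: "\<forall>x\<in>V - X. u x = 0" and gX: "\<forall>x\<in>V - (V - X). g x = 0"
    unfolding u_def g_def X_def by auto
  show ?thesis
  proof
    show "X \<subseteq> V" unfolding X_def by auto
    show "X \<noteq> {}" using support_nonempty[OF uX] u by auto
    have "X \<subseteq> A" unfolding X_def using supp t by force
    thus "X \<noteq> V" using A sum_m_Diff[OF A(1)] by auto
    have "eig X \<le> energy u / sqnorm u" by (rule eig_le_rayleigh[OF uX]) (use u in simp)
    also have "\<dots> \<le> energy f / (1/4)"
      using u energy_pos_part_le[where f=f and t=t] energy_nonneg[of u] unfolding u_def by (intro frac_le) auto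
    finally show "eig X \<le> 4 * energy f" by simp
    have "eig (V - X) \<le> energy g / sqnorm g"
      by (rule eig_le_rayleigh[OF gX]) (use g t in \<open>simp add: less_le_trans[OF _ g]\<close>)
    also have "\<dots> \<le> energy f / (t^2/2)"
      using g t energy_neg_part_le[where f=f and t=t] energy_nonneg[of g] unfolding g_def by (intro frac_le) auto
    finally show "eig (V - X) \<le> 2 * energy f / t^2" by (simp add: mult.commute)
  qed
qed

lemma alpha_spectral_le_energy:
  assumes A: "A \<subseteq> V" "sum m A \<le> 1/2" and nonneg: "\<forall>x\<in>V. f x \<ge> 0"
    and supp: "\<forall>x\<in>V - A. f x = 0" and f1: "sqnorm f = 1"
  shows "alpha_spec \<le> 8 * energy f"
proof -
  obtain X where X: "X \<subseteq> V" "X \<noteq> {}" "X \<noteq> V" "eig X \<le> 4 * energy f"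
      "eig (V - X) \<le> 2 * energy f / (1/2)^2"
    using level_set_partition[OF A nonneg supp f1, of "1/2"] A(2) by (auto simp: power2_eq_square)
  have X': "V - X \<subseteq> V" "V - X \<noteq> {}" "V - X \<noteq> V" using X by auto
  have "alpha_spec \<le> log_mean (eig X) (eig (V - X))" by (rule alpha_spectral_le[OF X(1-3)])
  also have "\<dots> \<le> max (eig X) (eig (V - X))"
    by (rule log_mean_between(2)[OF eig_pos[OF X(1-3)] eig_pos[OF X']])
  also have "\<dots> \<le> 8 * energy f" using X(4,5) energy_nonneg[of f] by (simp add: power2_eq_square)
  finally show ?thesis .
qed

text \<open>Choosing t^2 = 1 / (4 m(A)) in the level-set partition.\<close>

lemma alpha_spectral_ln_mass_le_energy:
  assumes A: "A \<subseteq> V" "sum m A \<le> 1/2" and nonneg: "\<forall>x\<in>V. f x \<ge> 0"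
    and supp: "\<forall>x\<in>V - A. f x = 0" and f1: "sqnorm f = 1"
  shows "alpha_spec * (- ln (sum m A) - ln 2) \<le> 8 * energy f"
proof -
  define p where "p = sum m A"
  have p: "p > 0" unfolding p_def using sum_m_pos[OF A(1)] support_nonempty[OF supp] f1 by simp
  show ?thesis
  proof (cases "p = 1/2")
    case True
    have "- ln p - ln 2 = 0" unfolding True by (simp add: ln_div)
    thus ?thesis using energy_nonneg[of f] unfolding p_def by simp
  next
    case False
    hence p_less: "p < 1/2" using A(2) unfolding p_def by simp
    define t where "t = 1 / (2 * sqrt p)"
    have t: "t > 0" unfolding t_def using p by simp
    have t2: "t^2 = 1 / (4 * p)" unfolding t_def using p by (simp add: power_divide power_mult_distrib)
    obtain X where X: "X \<subseteq> V" "X \<noteq> {}" "X \<noteq> V" "eig X \<le> 4 * energy f"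
        "eig (V - X) \<le> 2 * energy f / t^2"
      by (rule level_set_partition[OF A nonneg supp f1, of t])
        (use p t t2 in \<open>auto simp: p_def[symmetric]\<close>)
    have X': "V - X \<subseteq> V" "V - X \<noteq> {}" "V - X \<noteq> V" using X by auto
    have a: "eig X > 0" and b: "eig (V - X) > 0" using eig_pos X X' by auto
    have E: "energy f > 0" using a X(4) by simp
    have b2: "eig (V - X) \<le> 8 * p * energy f" using X(5) p unfolding t2 by (simp add: field_simps)
    have ln_eq: "ln (4 * energy f) - ln (8 * p * energy f) = - ln p - ln 2"
      using p E ln_mult[of 2 4] by (simp add: ln_mult)
    have L: "- ln p - ln 2 > 0" using ln_less_cancel_iff[of "2 * p" 1] p p_less by (simp add: ln_mult)
    have "alpha_spec \<le> log_mean (eig X) (eig (V - X))" by (rule alpha_spectral_le[OF X(1-3)])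
    also have "\<dots> \<le> 2 * (4 * energy f) / (- ln p - ln 2)"
      using log_mean_le_of_bounds[OF a X(4) b b2] p E p_less unfolding ln_eq by simp
    finally show ?thesis using L unfolding p_def[symmetric] by (simp add: field_simps)
  qed
qed

lemma faber_krahn:
  assumes A: "A \<subseteq> V" "sum m A \<le> 1/2" and nonneg: "\<forall>x\<in>V. f x \<ge> 0"
    and supp: "\<forall>x\<in>V - A. f x = 0"
  shows "alpha_spec * sqnorm f \<le> 8 * energy f"
    and "alpha_spec * (- ln (sum m A) - ln 2) * sqnorm f \<le> 8 * energy f"
proof -
  have "alpha_spec * sqnorm f \<le> 8 * energy f
      \<and> alpha_spec * (- ln (sum m A) - ln 2) * sqnorm f \<le> 8 * energy f"
  proof (cases "sqnorm f = 0")
    case True thus ?thesis using energy_nonneg[of f] by simp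
  next
    case False
    hence pos: "sqnorm f > 0" using sqnorm_nonneg[of f] by simp
    define g where "g = (\<lambda>x. (1 / sqrt (sqnorm f)) * f x)"
    have g: "\<forall>x\<in>V. g x \<ge> 0" "\<forall>x\<in>V - A. g x = 0"
      unfolding g_def using nonneg supp sqnorm_nonneg[of f] by auto
    have g1: "sqnorm g = 1" and Eg: "energy g = energy f / sqnorm f"
      unfolding g_def using sqnorm_normalize[OF pos] by auto
    show ?thesis
      using alpha_spectral_le_energy[OF A g g1] alpha_spectral_ln_mass_le_energy[OF A g g1] pos
      unfolding Eg by (simp add: field_simps)
  qed
  thus "alpha_spec * sqnorm f \<le> 8 * energy f"
    "alpha_spec * (- ln (sum m A) - ln 2) * sqnorm f \<le> 8 * energy f" by auto
qed

text \<open>The j-th dyadic slice of w is supported where w > 2^j, a set of mass at most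
  12 / 4^j by Chebyshev; this turns the ln-mass term of the Faber-Krahn inequality
  into a weight j + 2.\<close>

lemma alpha_spectral_dyadic_slice_le:
  fixes j :: nat
  assumes card: "card V \<ge> 2" and B: "B \<subseteq> V" "sum m B \<le> 1/2" and nonneg: "\<forall>x\<in>V. w x \<ge> 0"
    and supp: "\<forall>x\<in>V - B. w x = 0" and w: "sqnorm w \<le> 12"
  defines "s \<equiv> \<lambda>x. dyadic_slice j (w x)"
  shows "alpha_spec * ((real j + 2) * ln 4) * sqnorm s \<le> 152 * energy s"
proof -
  define Bj where "Bj = {x\<in>V. w x > 2^j}"
  have "Bj \<subseteq> B"
  proof
    fix x assume "x \<in> Bj"
    hence "x \<in> V" "w x \<noteq> 0" unfolding Bj_def using zero_less_power[of 2 j] by auto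
    thus "x \<in> B" using supp by blast
  qed
  hence Bj: "Bj \<subseteq> V" "sum m Bj \<le> 1/2" using B sum_m_mono[of Bj B] by auto
  have s: "\<forall>x\<in>V. s x \<ge> 0" "\<forall>x\<in>V - Bj. s x = 0"
    unfolding s_def Bj_def dyadic_slice_def by (auto simp: max_def)
  show ?thesis
  proof (cases "sqnorm s = 0")
    case True thus ?thesis using energy_nonneg[of s] by simp
  next
    case False
    hence pos: "sqnorm s > 0" using sqnorm_nonneg[of s] by simp
    have mass: "sum m Bj > 0" using sum_m_pos[OF Bj(1)] support_nonempty[OF s(2) False] by simp
    have "sum m Bj \<le> 12 / 4^j"
      using sum_m_above_le[of "2^j" w] divide_right_mono[OF w, of "4^j"]
      unfolding Bj_def sq_two_power by simp
    hence "(real j + 2) * ln 4 \<le> (- ln (sum m Bj) - ln 2) + 18"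
      by (rule ln_weight_le_neg_ln_mass[OF mass])
    hence "alpha_spec * ((real j + 2) * ln 4) * sqnorm s
        \<le> alpha_spec * ((- ln (sum m Bj) - ln 2) + 18) * sqnorm s"
      using alpha_spectral_nonneg[OF card] pos by (intro mult_right_mono mult_left_mono) auto
    also have "\<dots> = alpha_spec * (- ln (sum m Bj) - ln 2) * sqnorm s + 18 * (alpha_spec * sqnorm s)"
      by (simp add: algebra_simps)
    also have "\<dots> \<le> 152 * energy s" using faber_krahn[OF Bj s] by linarith
    finally show ?thesis .
  qed
qed

abbreviation tail_ent_sq :: "(nat \<Rightarrow> real) \<Rightarrow> real" where
  "tail_ent_sq w \<equiv> \<Sum>x\<in>V. (if w x \<ge> 2 then (w x)^2 * ln ((w x)^2) else 0) * m x"

lemma alpha_spectral_tail_ent_sq_le: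
  assumes card: "card V \<ge> 2" and B: "B \<subseteq> V" "sum m B \<le> 1/2" and nonneg: "\<forall>x\<in>V. w x \<ge> 0"
    and supp: "\<forall>x\<in>V - B. w x = 0" and w: "sqnorm w \<le> 12"
  shows "alpha_spec * tail_ent_sq w \<le> 2432 * energy w"
proof -
  obtain K where "(\<Sum>x\<in>V. w x) < 2^K" using real_arch_pow[of 2 "\<Sum>x\<in>V. w x"] by auto
  moreover have "(2::real)^K \<le> 2^(Suc K)" by simp
  ultimately have K: "(\<Sum>x\<in>V. w x) \<le> 2^(Suc K)" by linarith
  have wK: "w x \<le> 2^(Suc K)" if "x \<in> V" for x
    using member_le_sum[of x V w] that nonneg finite_V K by auto
  define T where "T = (\<lambda>x. \<Sum>j\<le>K. (real j + 2) * (dyadic_slice j (w x))^2)"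
  have "tail_ent_sq w \<le> (\<Sum>x\<in>V. (16 * ln 4 * T x) * m x)"
  proof (intro sum_mono mult_right_mono)
    fix x assume x: "x \<in> V"
    have "T x \<ge> 0" unfolding T_def by (intro sum_nonneg mult_nonneg_nonneg) auto
    thus "(if w x \<ge> 2 then (w x)^2 * ln ((w x)^2) else 0) \<le> 16 * ln 4 * T x"
      using sq_ln_sq_le_dyadic_slices[OF _ wK[OF x]] unfolding T_def by auto
  qed (simp add: m_nonneg)
  also have "\<dots> = 16 * ln 4 * (\<Sum>j\<le>K. (real j + 2) * sqnorm (\<lambda>x. dyadic_slice j (w x)))"
    unfolding T_def sqnorm_eq_sum sum_distrib_left sum_distrib_right
    by (subst sum.swap) (simp add: mult_ac)
  finally have "alpha_spec * tail_ent_sq w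
      \<le> alpha_spec * (16 * ln 4 * (\<Sum>j\<le>K. (real j + 2) * sqnorm (\<lambda>x. dyadic_slice j (w x))))"
    using alpha_spectral_nonneg[OF card] by (rule mult_left_mono)
  also have "\<dots> = 16 * (\<Sum>j\<le>K. alpha_spec * ((real j + 2) * ln 4) * sqnorm (\<lambda>x. dyadic_slice j (w x)))"
    by (simp add: sum_distrib_left mult_ac)
  also have "\<dots> \<le> 16 * (\<Sum>j\<le>K. 152 * energy (\<lambda>x. dyadic_slice j (w x)))"
    using alpha_spectral_dyadic_slice_le[OF card B nonneg supp w] by (intro mult_left_mono sum_mono) auto
  also have "\<dots> \<le> 2432 * energy w"
    using sum_energy_le[of "{..K}" "\<lambda>j x. dyadic_slice j (w x)" w] sum_sq_dyadic_slice_diff_le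
    by (simp add: sum_distrib_left[symmetric])
  finally show ?thesis .
qed

lemma median_exists:
  fixes f :: "nat \<Rightarrow> real"
  assumes "V \<noteq> {}"
  obtains M where "M \<in> f ` V" "sum m {x\<in>V. f x > M} \<le> 1/2" "sum m {x\<in>V. f x < M} \<le> 1/2"
proof -
  define Y where "Y = {y\<in>f ` V. sum m {x\<in>V. f x \<le> y} \<ge> 1/2}"
  have finY: "finite Y" unfolding Y_def using finite_V by simp
  have "{x\<in>V. f x \<le> Max (f ` V)} = V" using finite_V by auto
  hence "Max (f ` V) \<in> Y" unfolding Y_def using finite_V assms sum_m by simp
  hence Yne: "Y \<noteq> {}" by auto
  define M where "M = Min Y"
  have "M \<in> Y" unfolding M_def using finY Yne by simp
  hence M: "M \<in> f ` V" "sum m {x\<in>V. f x \<le> M} \<ge> 1/2" unfolding Y_def by auto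
  have "{x\<in>V. f x > M} = V - {x\<in>V. f x \<le> M}" by auto
  hence above: "sum m {x\<in>V. f x > M} \<le> 1/2" using sum_m_Diff[of "{x\<in>V. f x \<le> M}"] M(2) by auto
  have below: "sum m {x\<in>V. f x < M} \<le> 1/2"
  proof (cases "{x\<in>V. f x < M} = {}")
    case False
    define y where "y = Max (f ` {x\<in>V. f x < M})"
    have fin: "finite (f ` {x\<in>V. f x < M})" using finite_V by simp
    have "y \<in> f ` {x\<in>V. f x < M}" unfolding y_def using fin False by simp
    hence "y \<in> f ` V" "y < M" by auto
    have "y \<notin> Y"
    proof
      assume "y \<in> Y"
      hence "M \<le> y" unfolding M_def by (rule Min_le[OF finY])
      thus False using \<open>y < M\<close> by simp
    qed
    hence "sum m {x\<in>V. f x \<le> y} < 1/2" unfolding Y_def using \<open>y \<in> f ` V\<close> by auto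
    moreover have "{x\<in>V. f x < M} \<subseteq> {x\<in>V. f x \<le> y}" unfolding y_def using fin by auto
    ultimately show ?thesis using sum_m_mono[of "{x\<in>V. f x < M}" "{x\<in>V. f x \<le> y}"] by auto
  next
    case True
    show ?thesis unfolding True by simp
  qed
  show ?thesis using that M(1) above below by blast
qed

lemma sq_deviation_bounds:
  assumes nonneg: "\<forall>x\<in>V. f x \<ge> 0" and f1: "sqnorm f = 1" and M: "M \<ge> 0"
  shows "(M - 1)^2 \<le> (\<Sum>x\<in>V. (f x - M)^2 * m x)" "(\<Sum>x\<in>V. (f x - M)^2 * m x) \<le> 1 + M^2"
proof -
  define c where "c = (\<Sum>x\<in>V. f x * m x)"
  have expand: "(\<Sum>x\<in>V. (f x - a)^2 * m x) = 1 - 2 * a * c + a^2" for a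
  proof -
    have "(\<Sum>x\<in>V. (f x - a)^2 * m x)
        = (\<Sum>x\<in>V. (f x)^2 * m x) - 2 * a * (\<Sum>x\<in>V. f x * m x) + a^2 * (\<Sum>x\<in>V. m x)"
      by (simp add: sum_subtractf sum.distrib sum_distrib_left power2_eq_square algebra_simps)
    thus ?thesis using f1 sum_m unfolding sqnorm_eq_sum c_def by simp
  qed
  have "c \<ge> 0" unfolding c_def using nonneg m_nonneg by (intro sum_nonneg) auto
  moreover have "0 \<le> (\<Sum>x\<in>V. (f x - c)^2 * m x)" using m_nonneg by (intro sum_nonneg) auto
  hence "0 \<le> 1 - 2 * c * c + c^2" by (simp only: expand)
  hence "c^2 \<le> 1" unfolding power2_eq_square by linarith
  hence "c \<le> 1" using power2_le_imp_le[of c 1] by simp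
  ultimately have "M * c \<le> M" "0 \<le> M * c" using M by (simp_all add: mult_left_le)
  thus "(M - 1)^2 \<le> (\<Sum>x\<in>V. (f x - M)^2 * m x)" "(\<Sum>x\<in>V. (f x - M)^2 * m x) \<le> 1 + M^2"
    unfolding expand by (simp_all add: power2_diff)
qed

lemma ent_sq_le_deviation:
  assumes nonneg: "\<forall>x\<in>V. f x \<ge> 0" and f1: "sqnorm f = 1" and M: "0 \<le> M" "M \<le> 3/2"
  shows "ent_sq f \<le> 28 * (\<Sum>x\<in>V. (f x - M)^2 * m x) + tail_ent_sq (\<lambda>x. 2 * max (f x - M) 0)"
proof -
  have "ent_sq f = (\<Sum>x\<in>V. ((if (f x)^2 = 0 then 0 else (f x)^2 * ln ((f x)^2)) - (f x)^2 + 1) * m x)"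
    using f1 sum_m unfolding Ent_def sqnorm_eq_sum by (simp add: sum_subtractf sum.distrib algebra_simps)
  also have "\<dots> \<le> (\<Sum>x\<in>V. (14 * (f x - M)^2 + 14 * (M - 1)^2
      + (if 2 * max (f x - M) 0 \<ge> 2 then (2 * max (f x - M) 0)^2 * ln ((2 * max (f x - M) 0)^2) else 0)) * m x)"
    using sq_ln_sq_pointwise_bound[OF _ M] nonneg m_nonneg by (intro sum_mono mult_right_mono) auto
  also have "\<dots> = 14 * (\<Sum>x\<in>V. (f x - M)^2 * m x) + 14 * (M - 1)^2 + tail_ent_sq (\<lambda>x. 2 * max (f x - M) 0)"
    using sum_m by (simp add: sum.distrib distrib_right sum_distrib_left[symmetric] mult.assoc)
  also have "\<dots> \<le> 28 * (\<Sum>x\<in>V. (f x - M)^2 * m x) + tail_ent_sq (\<lambda>x. 2 * max (f x - M) 0)"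
    using sq_deviation_bounds(1)[OF nonneg f1 M(1)] by simp
  finally show ?thesis .
qed

lemma median_sq_le:
  assumes nonneg: "\<forall>x\<in>V. f x \<ge> 0" and f1: "sqnorm f = 1" and M: "M \<ge> 0"
    and below: "sum m {x\<in>V. f x < M} \<le> 1/2"
  shows "M^2 \<le> 2"
proof -
  have eq: "{x\<in>V. M \<le> \<bar>f x\<bar>} = V - {x\<in>V. f x < M}" using nonneg by auto
  have "sum m (V - {x\<in>V. f x < M}) = 1 - sum m {x\<in>V. f x < M}" by (rule sum_m_Diff) auto
  hence "1/2 \<le> sum m {x\<in>V. M \<le> \<bar>f x\<bar>}" unfolding eq using below by linarith
  hence "M^2 * (1/2) \<le> M^2 * sum m {x\<in>V. M \<le> \<bar>f x\<bar>}" by (intro mult_left_mono) auto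
  thus ?thesis using chebyshev[OF M, of f] f1 by linarith
qed

text \<open>Split f at a median M: the parts above and below M satisfy the Faber-Krahn inequality,
  and the doubled part above M carries the large values of f.\<close>

lemma alpha_spectral_ent_sq_le_nonneg:
  assumes card: "card V \<ge> 2" and nonneg: "\<forall>x\<in>V. f x \<ge> 0" and f1: "sqnorm f = 1"
  shows "alpha_spec * ent_sq f \<le> 10000 * energy f"
proof -
  obtain M where M: "M \<in> f ` V" "sum m {x\<in>V. f x > M} \<le> 1/2" "sum m {x\<in>V. f x < M} \<le> 1/2"
    by (rule median_exists[of f]) (use card in auto)
  have M0: "M \<ge> 0" using M(1) nonneg by auto
  have M2: "M^2 \<le> 2" by (rule median_sq_le[OF nonneg f1 M0 M(3)])
  hence M32: "M \<le> 3/2" using power2_le_imp_le[of M "3/2"] by (simp add: power_divide)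
  define g where "g = (\<lambda>x. max (f x - M) 0)"
  define h where "h = (\<lambda>x. max (M - f x) 0)"
  define D where "D = (\<Sum>x\<in>V. (f x - M)^2 * m x)"
  have D: "D = sqnorm g + sqnorm h"
    unfolding D_def sqnorm_eq_sum sum.distrib[symmetric] g_def h_def
    by (intro sum.cong refl) (auto simp: max_def power2_eq_square algebra_simps)
  have fk_g: "alpha_spec * sqnorm g \<le> 8 * energy g"
    by (rule faber_krahn(1)[of "{x\<in>V. f x > M}"]) (use M(2) in \<open>auto simp: g_def\<close>)
  have fk_h: "alpha_spec * sqnorm h \<le> 8 * energy h"
    by (rule faber_krahn(1)[of "{x\<in>V. f x < M}"]) (use M(3) in \<open>auto simp: h_def\<close>)
  have "sqnorm g \<le> 3"
    using sq_deviation_bounds(2)[OF nonneg f1 M0] sqnorm_nonneg[of h] M2 unfolding D_def[symmetric] D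
    by linarith
  hence "sqnorm (\<lambda>x. 2 * g x) \<le> 12" by (simp add: sqnorm_scale)
  moreover have "\<forall>x\<in>V. 2 * g x \<ge> 0" "\<forall>x\<in>V - {x\<in>V. f x > M}. 2 * g x = 0"
    unfolding g_def by auto
  ultimately have "alpha_spec * tail_ent_sq (\<lambda>x. 2 * g x) \<le> 2432 * energy (\<lambda>x. 2 * g x)"
    by (intro alpha_spectral_tail_ent_sq_le[OF card _ M(2), where w="\<lambda>x. 2 * g x"]) auto
  hence tail: "alpha_spec * tail_ent_sq (\<lambda>x. 2 * g x) \<le> 2432 * (4 * energy g)"
    by (simp add: energy_scale)
  have "alpha_spec * ent_sq f \<le> alpha_spec * (28 * D + tail_ent_sq (\<lambda>x. 2 * g x))"
    using ent_sq_le_deviation[OF nonneg f1 M0 M32] alpha_spectral_nonneg[OF card]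
    unfolding D_def g_def by (intro mult_left_mono) auto
  also have "\<dots> \<le> 28 * (8 * energy g) + 28 * (8 * energy h) + 2432 * (4 * energy g)"
    using fk_g fk_h tail unfolding D by (simp add: algebra_simps)
  also have "\<dots> \<le> 10000 * energy f"
    using energy_pos_part_neg_part_le[of f M] energy_nonneg[of g] energy_nonneg[of h]
    unfolding g_def h_def by linarith
  finally show ?thesis .
qed

theorem alpha_spectral_le_log_sobolev:
  assumes card: "card V \<ge> 2"
  shows "alpha_spec \<le> 10000 * alpha"
proof -
  have "alpha_spec / 10000 \<le> alpha"
  proof (rule log_sobolev_greatest[OF card])
    fix f assume f1: "sqnorm f = 1" and pos: "ent_sq f > 0"
    have "energy (\<lambda>x. \<bar>f x\<bar>) \<le> energy f"
    proof (rule energy_mono)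
      fix x y
      show "(\<bar>f x\<bar> - \<bar>f y\<bar>)^2 \<le> (f x - f y)^2"
        using abs_triangle_ineq3[of "f x" "f y"] by (simp add: abs_le_square_iff)
    qed
    moreover have "alpha_spec * ent_sq f \<le> 10000 * energy (\<lambda>x. \<bar>f x\<bar>)"
      using alpha_spectral_ent_sq_le_nonneg[OF card, of "\<lambda>x. \<bar>f x\<bar>"] f1
      by (simp add: sqnorm_eq_sum)
    ultimately show "alpha_spec / 10000 \<le> energy f / ent_sq f" using pos by (simp add: field_simps)
  qed
  thus ?thesis by simp
qed

end

theorem corollary3p4:
  shows "\<exists>c C :: real. c > 0 \<and> C > 0 \<and>
    (\<forall>(V :: nat set) P m. reversible_chain V P m \<longrightarrow> card V \<ge> 2 \<longrightarrow>
       c * log_sobolev V P m \<le> alpha_spectral V P m \<and>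
       alpha_spectral V P m \<le> C * log_sobolev V P m)"
proof -
  have "(1/8) * log_sobolev V P m \<le> alpha_spectral V P m
      \<and> alpha_spectral V P m \<le> 10000 * log_sobolev V P m"
    if "reversible_chain V P m" "card V \<ge> 2" for V :: "nat set" and P m
  proof -
    interpret reversible_markov_chain V P m by unfold_locales fact
    show ?thesis
      using log_sobolev_le_alpha_spectral[OF that(2)] alpha_spectral_le_log_sobolev[OF that(2)] by simp
  qed
  thus ?thesis by (intro exI[of _ "1/8"] exI[of _ 10000]) auto
qed

end
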